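(* Let $d,n\in\mathbb{N}_{\ge1}$. For any ReLU FNN $f_{FF}:\mathbb{R}^{dn}\to\mathbb{R}$ with depth $L$, width $W$ and weight bound $B$, there exists a Transformer $\boldsymbol T^{(FF)}:\mathbb{R}^{(d+n)\times n}\to\mathbb{R}^{1\times n}$ of length $1$ with size $\{(L_0,W_0),(H_1,S_1),(L_1,W_1)\}=\{(2,2dn),(1,dn),(L,\max\{W,2dn\})\}$ and dimension vector $(d+n,d+n,2dn,1)$ such that for any $\boldsymbol X\in[0,1]^{d\times n}$, $$\boldsymbol T^{(FF)}\left(\begin{pmatrix}\boldsymbol X\\ \boldsymbol I_{n\times n}-\boldsymbol 1_{n\times n}\end{pmatrix}\right)=f_{FF}(\boldsymbol X^{(flt)})\boldsymbol 1_{1\times n},$$ where $\boldsymbol X^{(flt)}=(x_{11},\dots,x_{1n},x_{21},\dots,x_{2n},\dots,x_{d1},\dots,x_{dn})^\top\in\mathbb{R}^{dn}$. Furthermore, $B_{FF}=\max\{B,1\}$ and $B_{SA}=n$.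
   Context: $\boldsymbol 1_{n\times n}$ is the all-ones matrix. ReLU FNN of depth $L$, width $W$: $f_0=x$, $f_l=\sigma_R(W_lf_{l-1}+b_l)$ ($1\le l\le L-1$), $f=W_Lf_{L-1}+b_L$ with hidden width $W$, $\sigma_R(x)=\max\{x,0\}$; weight bound = max absolute parameter value. Transformers: a feedforward block applies such a net column-wise; a self-attention layer on $\mathbb{R}^{D\times n}$ with $H$ heads of size $S$ is $X\mapsto X+\sum_{h=1}^HW_O^{(h)}W_V^{(h)}X\sigma_S(X^\top W_K^{(h)\top}W_Q^{(h)}X)$ with $W_O^{(h)}\in\mathbb{R}^{D\times S}$, $W_V^{(h)},W_K^{(h)},W_Q^{(h)}\in\mathbb{R}^{S\times D}$ and $\sigma_S$ the column-wise softmax; embedding layer $X\mapsto W_{EB}X+B_{EB}$. A Transformer of length $K$ is $\mathcal F_{FF}^{(K)}\circ\mathcal F_{SA}^{(K)}\circ\cdots\circ\mathcal F_{SA}^{(1)}\circ\mathcal F_{FF}^{(0)}\circ\mathcal F_{EB}$; size lists depths/widths $(L_k,W_k)$ of $\mathcal F_{FF}^{(k)}$ and head numbers/sizes $(H_k,S_k)$ of $\mathcal F_{SA}^{(k)}$; dimension vector $(d_{in},d_0,\dots,d_K,d_{out})$ means $\mathcal F_{EB}:\mathbb{R}^{d_{in}\times n}\to\mathbb{R}^{d_0\times n}$, $\mathcal F_{FF}^{(k)}:\mathbb{R}^{d_k\times n}\to\mathbb{R}^{d_{k+1}\times n}$ ($d_{K+1}=d_{out}$), $\mathcal F_{SA}^{(k)}$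 on $\mathbb{R}^{d_k\times n}$. $B_{FF},B_{SA}$ bound absolute values of parameters of feedforward blocks and attention layers. *)

theory Defs
  imports Complex_Main
begin

text \<open>Vectors are functions nat => real (coordinates 0..k-1 meaningful),
  matrices are functions nat => nat => real (row index, column index).\<close>

type_synonym vec = "nat \<Rightarrow> real"
type_synonym mat = "nat \<Rightarrow> nat \<Rightarrow> real"

definition relu :: "real \<Rightarrow> real" where
  "relu x = max x 0"

definition affine :: "nat \<Rightarrow> mat \<Rightarrow> vec \<Rightarrow> vec \<Rightarrow> vec" where
  "affine k A b x = (\<lambda>i. (\<Sum>j<k. A i j * x j) + b i)"

fun fnn_eval :: "nat list \<Rightarrow> (mat \<times> vec) list \<Rightarrow> vec \<Rightarrow> vec" where
  "fnn_eval (k # ds) ((A, b) # ls) x =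
     (if ls = [] then affine k A b x
      else fnn_eval ds ls (\<lambda>i. relu (affine k A b x i)))"
| "fnn_eval _ _ x = x"

definition is_fnn :: "nat list \<Rightarrow> (mat \<times> vec) list \<Rightarrow> nat \<Rightarrow> nat \<Rightarrow> nat \<Rightarrow> nat \<Rightarrow> real \<Rightarrow> bool" where
  "is_fnn ds ls L W din dout B \<longleftrightarrow>
     L \<ge> 1 \<and> length ls = L \<and> length ds = L + 1 \<and>
     ds ! 0 = din \<and> ds ! L = dout \<and>
     (\<forall>l. 0 < l \<and> l < L \<longrightarrow> ds ! l = W) \<and>
     (\<forall>l<L. \<forall>i<ds ! (l+1).
        (\<forall>j<ds ! l. \<bar>fst (ls ! l) i j\<bar> \<le> B) \<and> \<bar>snd (ls ! l) i\<bar> \<le> B)"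

definition ff_block :: "nat list \<Rightarrow> (mat \<times> vec) list \<Rightarrow> mat \<Rightarrow> mat" where
  "ff_block ds ls X = (\<lambda>i j. fnn_eval ds ls (\<lambda>r. X r j) i)"

definition mmul :: "nat \<Rightarrow> mat \<Rightarrow> mat \<Rightarrow> mat" where
  "mmul k A B = (\<lambda>i j. \<Sum>l<k. A i l * B l j)"

definition transp :: "mat \<Rightarrow> mat" where
  "transp A = (\<lambda>i j. A j i)"

definition softmax_col :: "nat \<Rightarrow> mat \<Rightarrow> mat" where
  "softmax_col n A = (\<lambda>i j. exp (A i j) / (\<Sum>i'<n. exp (A i' j)))"

definition self_attn :: "nat \<Rightarrow> nat \<Rightarrow> nat \<Rightarrow> (mat \<times> mat \<times> mat \<times> mat) list \<Rightarrow> mat \<Rightarrow> mat" where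
  "self_attn D S n heads X = (\<lambda>i j. X i j +
     (\<Sum>h<length heads. case heads ! h of (WO, WV, WK, WQ) \<Rightarrow>
        mmul n (mmul S WO (mmul D WV X))
          (softmax_col n (mmul S (transp (mmul D WK X)) (mmul D WQ X))) i j))"

definition heads_bounded :: "nat \<Rightarrow> nat \<Rightarrow> (mat \<times> mat \<times> mat \<times> mat) list \<Rightarrow> real \<Rightarrow> bool" where
  "heads_bounded D S heads Bd \<longleftrightarrow>
     (\<forall>h<length heads. case heads ! h of (WO, WV, WK, WQ) \<Rightarrow>
        (\<forall>i<D. \<forall>s<S. \<bar>WO i s\<bar> \<le> Bd) \<and>
        (\<forall>s<S. \<forall>i<D. \<bar>WV s i\<bar> \<le> Bd \<and> \<bar>WK s i\<bar> \<le> Bd \<and> \<bar>WQ s i\<bar> \<le> Bd))"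

definition embed :: "nat \<Rightarrow> mat \<Rightarrow> mat \<Rightarrow> mat \<Rightarrow> mat" where
  "embed din WEB BEB X = (\<lambda>i j. (\<Sum>k<din. WEB i k * X k j) + BEB i j)"

definition transformer1 ::
  "nat \<Rightarrow> nat \<Rightarrow> nat \<Rightarrow> nat \<Rightarrow> mat \<Rightarrow> mat \<Rightarrow> nat list \<Rightarrow> (mat \<times> vec) list \<Rightarrow>
   (mat \<times> mat \<times> mat \<times> mat) list \<Rightarrow> nat list \<Rightarrow> (mat \<times> vec) list \<Rightarrow> mat \<Rightarrow> mat" where
  "transformer1 din D S n WEB BEB ds0 ls0 heads ds1 ls1 X =
     ff_block ds1 ls1 (self_attn D S n heads (ff_block ds0 ls0 (embed din WEB BEB X)))"

definition stack_input :: "nat \<Rightarrow> mat \<Rightarrow> mat" where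
  "stack_input d X = (\<lambda>i j. if i < d then X i j else (if i - d = j then 1 else 0) - 1)"

text \<open>Row-major flattening: entry (i,j) (0-based) goes to coordinate i*n + j.\<close>
definition flatten :: "nat \<Rightarrow> mat \<Rightarrow> vec" where
  "flatten n X = (\<lambda>k. X (k div n) (k mod n))"

end

theory Submission
  imports Defs
begin

(* The embedding is the identity. With N = d n, the first feedforward block puts
   relu(x_(i,k) + delta_(j,k) - 1) into row N + n i + j of column k; since x_(i,k) lies in [0,1]
   this is x_(i,k) if j = k and 0 otherwise, and rows below N are zero. A single head with zero
   queries and keys averages uniformly over the n columns; with value matrix moving rows N + p to
   rows p and output scaled by n, it adds to every column the row sums of the lower block, i.e.
   the vector X^(flt) in rows 0..N-1. The given network, zero-padded to the larger widths, reads
   exactly these rows. *)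

(* Entries outside the original dimensions are zeroed, so larger widths may be used for evaluation. *)
fun pad_layers :: "nat list \<Rightarrow> (mat \<times> vec) list \<Rightarrow> (mat \<times> vec) list" where
  "pad_layers (k # k' # ks) ((A, b) # ls) =
     ((\<lambda>i j. if i < k' \<and> j < k then A i j else 0), (\<lambda>i. if i < k' then b i else 0))
       # pad_layers (k' # ks) ls"
| "pad_layers _ _ = []"

lemma length_pad_layers: "length ds = length ls + 1 \<Longrightarrow> length (pad_layers ds ls) = length ls"
  by (induction ds ls rule: pad_layers.induct) auto

lemma nth_pad_layers:
  "length ds = length ls + 1 \<Longrightarrow> l < length ls \<Longrightarrow>
   pad_layers ds ls ! l = ((\<lambda>i j. if i < ds ! (l+1) \<and> j < ds ! l then fst (ls ! l) i j else 0),
                          (\<lambda>i. if i < ds ! (l+1) then snd (ls ! l) i else 0))"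
  by (induction ds ls arbitrary: l rule: pad_layers.induct) (auto simp: nth_Cons' cong: if_cong)

lemma affine_pad:
  assumes "k \<le> q" "\<forall>j<k. x' j = x j" "i < k'"
  shows "affine q (\<lambda>i j. if i < k' \<and> j < k then A i j else 0) (\<lambda>i. if i < k' then b i else 0) x' i
       = affine k A b x i"
proof -
  have "(\<Sum>j<q. (if i < k' \<and> j < k then A i j else 0) * x' j) = (\<Sum>j\<in>{..<q} \<inter> {..<k}. A i j * x j)"
    using assms by (simp add: sum.inter_restrict if_distrib[of "\<lambda>y. y * _"] cong: if_cong)
  also have "{..<q} \<inter> {..<k} = {..<k}" using assms(1) by auto
  finally show ?thesis using assms(3) by (simp add: affine_def)
qed

lemma fnn_eval_pad_layers:
  assumes "length ds = length ls + 1" "list_all2 (\<le>) ds ds'"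
    "\<forall>j<hd ds. x' j = x j" "i < last ds"
  shows "fnn_eval ds' (pad_layers ds ls) x' i = fnn_eval ds ls x i"
  using assms
proof (induction ls arbitrary: ds ds' x x')
  case Nil
  then show ?case by (auto simp: list_all2_Cons1 length_Suc_conv)
next
  case (Cons p ls)
  obtain A b where p: "p = (A, b)" by fastforce
  from Cons.prems(1,2) obtain k k' ks q q' qs where ds: "ds = k # k' # ks" and ds': "ds' = q # q' # qs"
    and le: "k \<le> q" "list_all2 (\<le>) (k' # ks) (q' # qs)"
    by (auto simp: list_all2_Cons1 length_Suc_conv)
  have aff: "affine q (\<lambda>i j. if i < k' \<and> j < k then A i j else 0) (\<lambda>i. if i < k' then b i else 0) x' j
       = affine k A b x j" if "j < k'" for j
    using affine_pad[OF le(1) _ that] Cons.prems(3) by (simp add: ds)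
  show ?case
  proof (cases "ls = []")
    case True
    then show ?thesis using Cons.prems(1,4) aff by (simp add: ds ds' p)
  next
    case False
    have "pad_layers (k' # ks) ls \<noteq> []"
      using False length_pad_layers[of "k' # ks" ls] Cons.prems(1) by (auto simp: ds)
    then show ?thesis
      using False Cons.prems Cons.IH[of "k' # ks" "q' # qs"] le(2) aff by (simp add: ds ds' p)
  qed
qed

lemma is_fnn_mono_bound:
  "is_fnn ds ls L W din dout B \<Longrightarrow> B \<le> B' \<Longrightarrow> is_fnn ds ls L W din dout B'"
  unfolding is_fnn_def by (meson order_trans)

lemma is_fnn_widen:
  assumes fnn: "is_fnn ds ls L W din dout B" and "0 \<le> B" "W \<le> W'" "din \<le> din'"
  obtains ds' ls' where "is_fnn ds' ls' L W' din' dout B"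
    and "\<And>x x' i. \<forall>j<din. x' j = x j \<Longrightarrow> i < dout \<Longrightarrow> fnn_eval ds' ls' x' i = fnn_eval ds ls x i"
proof
  define ds' where "ds' = map (\<lambda>l. if l = 0 then din' else if l = L then dout else W') [0..<L+1]"
  have L: "1 \<le> L" "length ls = L" "length ds = L + 1" using fnn by (auto simp: is_fnn_def)
  have nth_ds': "ds' ! l = (if l = 0 then din' else if l = L then dout else W')" if "l \<le> L" for l
    using that by (simp add: ds'_def del: upt_Suc)
  have "length ds' = L + 1" by (simp add: ds'_def)
  have ds_le: "list_all2 (\<le>) ds ds'"
    unfolding list_all2_conv_all_nth using fnn assms(3,4) \<open>length ds' = L + 1\<close> by (auto simp: L nth_ds' is_fnn_def)
  show "is_fnn ds' (pad_layers ds ls) L W' din' dout B"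
    unfolding is_fnn_def
  proof (intro conjI allI impI)
    fix l i assume "l < L"
    then show "\<bar>snd (pad_layers ds ls ! l) i\<bar> \<le> B"
      using fnn \<open>0 \<le> B\<close> by (auto simp: nth_pad_layers L is_fnn_def)
    fix j
    show "\<bar>fst (pad_layers ds ls ! l) i j\<bar> \<le> B"
      using \<open>l < L\<close> fnn \<open>0 \<le> B\<close> by (auto simp: nth_pad_layers L is_fnn_def)
  qed (use L \<open>length ds' = L + 1\<close> in \<open>auto simp: nth_ds' length_pad_layers\<close>)
  show "fnn_eval ds' (pad_layers ds ls) x' i = fnn_eval ds ls x i"
    if "\<forall>j<din. x' j = x j" "i < dout" for x x' i
  proof (rule fnn_eval_pad_layers[OF _ ds_le])
    have "ds \<noteq> []" using L by auto
    then have "hd ds = din" "last ds = dout"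
      using fnn by (simp_all add: hd_conv_nth last_conv_nth L is_fnn_def)
    then show "\<forall>j<hd ds. x' j = x j" "i < last ds" using that by simp_all
  qed (simp add: L)
qed

definition diag_mat :: "real \<Rightarrow> mat" where
  "diag_mat c = (\<lambda>i j. if i = j then c else 0)"

definition shift_mat :: "nat \<Rightarrow> mat" where
  "shift_mat m = (\<lambda>i j. if j = m + i then 1 else 0)"

lemma sum_diag_mat: "i < k \<Longrightarrow> (\<Sum>j<k. diag_mat c i j * x j) = c * x i"
  by (simp add: diag_mat_def if_distrib[of "\<lambda>y. y * _"] cong: if_cong)

lemma sum_shift_mat: "m + i < k \<Longrightarrow> (\<Sum>j<k. shift_mat m i j * x j) = x (m + i)"
  by (simp add: shift_mat_def if_distrib[of "\<lambda>y. y * _"] cong: if_cong)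

lemma embed_diag_mat: "i < k \<Longrightarrow> embed k (diag_mat 1) (\<lambda>_ _. 0) X i j = X i j"
  by (simp add: embed_def sum_diag_mat)

lemma relu_mask:
  assumes "0 \<le> x" "x \<le> 1"
  shows "relu (x + ((if P then 1 else 0) - 1)) = (if P then x else 0)"
  using assms by (simp add: relu_def)

definition gather_mat :: "nat \<Rightarrow> nat \<Rightarrow> mat" where
  "gather_mat d n = (\<lambda>m r. if d * n \<le> m \<and> m < 2 * d * n \<and>
     (r = (m - d * n) div n \<or> r = d + (m - d * n) mod n) then 1 else 0)"

lemma relu_gather_stack_input:
  assumes X: "\<forall>i<d. \<forall>j<n. 0 \<le> X i j \<and> X i j \<le> 1" and "k < n"
  shows "relu (affine (d + n) (gather_mat d n) (\<lambda>_. 0) (\<lambda>r. stack_input d X r k) m) =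
    (if d * n \<le> m \<and> m < 2 * d * n \<and> (m - d * n) mod n = k then X ((m - d * n) div n) k else 0)"
proof (cases "d * n \<le> m \<and> m < 2 * d * n")
  case True
  define p where "p = m - d * n"
  have "p < d * n" using True unfolding p_def by linarith
  then have row: "p div n < d" and col: "d + p mod n < d + n"
    using \<open>k < n\<close> by (simp_all add: less_mult_imp_div_less)
  have "affine (d + n) (gather_mat d n) (\<lambda>_. 0) (\<lambda>r. stack_input d X r k) m
      = (\<Sum>r<d + n. (if r = p div n then stack_input d X r k else 0)
                   + (if r = d + p mod n then stack_input d X r k else 0))"
    unfolding affine_def gather_mat_def p_def[symmetric] using True row
    by (simp, intro sum.cong) auto
  also have "\<dots> = X (p div n) k + ((if p mod n = k then 1 else 0) - 1)"
    using row col by (simp add: sum.distrib stack_input_def)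
  finally show ?thesis
    using True relu_mask X row \<open>k < n\<close> by (simp add: p_def)
next
  case False
  then show ?thesis by (auto simp: affine_def gather_mat_def relu_def)
qed

definition gather_dims :: "nat \<Rightarrow> nat \<Rightarrow> nat list" where
  "gather_dims d n = [d + n, 2 * d * n, 2 * d * n]"

(* The identity second layer only brings the block to the prescribed depth 2. *)
definition gather_layers :: "nat \<Rightarrow> nat \<Rightarrow> (mat \<times> vec) list" where
  "gather_layers d n = [(gather_mat d n, \<lambda>_. 0), (diag_mat 1, \<lambda>_. 0)]"

lemma is_fnn_gather: "is_fnn (gather_dims d n) (gather_layers d n) 2 (2 * d * n) (d + n) (2 * d * n) 1"
  by (auto simp: is_fnn_def gather_dims_def gather_layers_def gather_mat_def diag_mat_def
      numeral_2_eq_2 less_Suc_eq)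

lemma ff_block_gather:
  assumes X: "\<forall>i<d. \<forall>j<n. 0 \<le> X i j \<and> X i j \<le> 1"
    and E: "\<forall>r<d + n. E r k = stack_input d X r k" and "m < 2 * d * n" "k < n"
  shows "ff_block (gather_dims d n) (gather_layers d n) E m k =
    (if d * n \<le> m \<and> (m - d * n) mod n = k then X ((m - d * n) div n) k else 0)"
proof -
  have "ff_block (gather_dims d n) (gather_layers d n) E m k
      = relu (affine (d + n) (gather_mat d n) (\<lambda>_. 0) (\<lambda>r. E r k) m)"
    using \<open>m < 2 * d * n\<close>
    by (simp add: ff_block_def gather_dims_def gather_layers_def affine_def sum_diag_mat)
  also have "affine (d + n) (gather_mat d n) (\<lambda>_. 0) (\<lambda>r. E r k)
           = affine (d + n) (gather_mat d n) (\<lambda>_. 0) (\<lambda>r. stack_input d X r k)"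
    using E by (simp add: affine_def)
  finally show ?thesis
    using relu_gather_stack_input[OF X \<open>k < n\<close>] \<open>m < 2 * d * n\<close> by simp
qed

lemma softmax_col_zero: "softmax_col n (\<lambda>_ _. 0) = (\<lambda>_ _. 1 / real n)"
  by (simp add: softmax_col_def)

lemma self_attn_zero_query_key:
  "self_attn D S n [(WO, WV, \<lambda>_ _. 0, \<lambda>_ _. 0)] X i j
     = X i j + (\<Sum>l<n. mmul S WO (mmul D WV X) i l) / real n"
proof -
  have "mmul S (transp (mmul D (\<lambda>_ _. 0) X)) (mmul D (\<lambda>_ _. 0) X) = (\<lambda>_ _. 0)"
    by (simp add: mmul_def)
  then show ?thesis
    by (simp add: self_attn_def softmax_col_zero mmul_def[of n] sum_divide_distrib)
qed

definition average_head :: "nat \<Rightarrow> nat \<Rightarrow> mat \<times> mat \<times> mat \<times> mat" where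
  "average_head N n = (diag_mat (real n), shift_mat N, \<lambda>_ _. 0, \<lambda>_ _. 0)"

lemma heads_bounded_average_head:
  "1 \<le> n \<Longrightarrow> heads_bounded (2 * N) N [average_head N n] (real n)"
  by (simp add: heads_bounded_def average_head_def diag_mat_def shift_mat_def)

lemma self_attn_average_head:
  assumes "i < N"
  shows "self_attn (2 * N) N n [average_head N n] Z i j = Z i j + (\<Sum>l<n. Z (N + i) l)"
proof -
  have "mmul N (diag_mat (real n)) (mmul (2 * N) (shift_mat N) Z) i l = real n * Z (N + i) l" for l
    using assms by (simp add: mmul_def sum_diag_mat sum_shift_mat)
  then show ?thesis
    by (simp add: average_head_def self_attn_zero_query_key sum_distrib_left[symmetric])
qed

lemma self_attn_gather_flatten:
  assumes X: "\<forall>i<d. \<forall>j<n. 0 \<le> X i j \<and> X i j \<le> 1" and "j < n" "r < d * n"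
  shows "self_attn (2 * d * n) (d * n) n [average_head (d * n) n]
           (ff_block (gather_dims d n) (gather_layers d n)
             (embed (d + n) (diag_mat 1) (\<lambda>_ _. 0) (stack_input d X))) r j
         = flatten n X r"
proof -
  define Z where "Z = ff_block (gather_dims d n) (gather_layers d n)
                        (embed (d + n) (diag_mat 1) (\<lambda>_ _. 0) (stack_input d X))"
  have Z: "Z m k = (if d * n \<le> m \<and> (m - d * n) mod n = k then X ((m - d * n) div n) k else 0)"
    if "m < 2 * d * n" "k < n" for m k
    unfolding Z_def using ff_block_gather[OF X _ that] embed_diag_mat by simp
  have "(\<Sum>l<n. Z (d * n + r) l) = (\<Sum>l<n. if r mod n = l then X (r div n) l else 0)"
    using \<open>r < d * n\<close> by (intro sum.cong) (simp_all add: Z)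
  also have "\<dots> = flatten n X r"
    using \<open>j < n\<close> by (simp add: flatten_def)
  finally show ?thesis
    using self_attn_average_head[OF \<open>r < d * n\<close>, of n Z j] Z[of r j] assms(2,3)
    by (simp add: Z_def mult.assoc)
qed

theorem lemma8:
  fixes d n L W :: nat and B :: real
    and ds :: "nat list" and ls :: "(mat \<times> vec) list"
  assumes "d \<ge> 1" and "n \<ge> 1"
    and "is_fnn ds ls L W (d * n) 1 B"
  shows "\<exists>WEB BEB ds0 ls0 heads ds1 ls1.
     is_fnn ds0 ls0 2 (2 * d * n) (d + n) (2 * d * n) (max B 1) \<and>
     length heads = 1 \<and> heads_bounded (2 * d * n) (d * n) heads (real n) \<and>
     is_fnn ds1 ls1 L (max W (2 * d * n)) (2 * d * n) 1 (max B 1) \<and>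
     (\<forall>X. (\<forall>i<d. \<forall>j<n. 0 \<le> X i j \<and> X i j \<le> 1) \<longrightarrow>
        (\<forall>j<n. transformer1 (d + n) (2 * d * n) (d * n) n WEB BEB ds0 ls0 heads ds1 ls1
                 (stack_input d X) 0 j
               = fnn_eval ds ls (flatten n X) 0))"
proof -
  have "is_fnn ds ls L W (d * n) 1 (max B 1)"
    using assms(3) by (rule is_fnn_mono_bound) simp
  then obtain ds1 ls1 where ff1: "is_fnn ds1 ls1 L (max W (2 * d * n)) (2 * d * n) 1 (max B 1)"
    and eval1: "\<And>x x'. \<forall>j<d * n. x' j = x j \<Longrightarrow> fnn_eval ds1 ls1 x' 0 = fnn_eval ds ls x 0"
    by (rule is_fnn_widen[where W' = "max W (2 * d * n)" and din' = "2 * d * n"]) (simp_all add: mult.assoc)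
  have ff0: "is_fnn (gather_dims d n) (gather_layers d n) 2 (2 * d * n) (d + n) (2 * d * n) (max B 1)"
    using is_fnn_gather by (rule is_fnn_mono_bound) simp
  have heads: "heads_bounded (2 * d * n) (d * n) [average_head (d * n) n] (real n)"
    using heads_bounded_average_head[OF \<open>n \<ge> 1\<close>] by (simp add: mult.assoc)
  have "transformer1 (d + n) (2 * d * n) (d * n) n (diag_mat 1) (\<lambda>_ _. 0)
          (gather_dims d n) (gather_layers d n) [average_head (d * n) n] ds1 ls1 (stack_input d X) 0 j
        = fnn_eval ds ls (flatten n X) 0"
    if "\<forall>i<d. \<forall>j<n. 0 \<le> X i j \<and> X i j \<le> 1" "j < n" for X j
    using self_attn_gather_flatten[OF that] by (simp add: transformer1_def ff_block_def eval1)
  then show ?thesis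
    using ff0 heads ff1
    by (intro exI[of _ "diag_mat 1"] exI[of _ "\<lambda>_ _. 0"] exI[of _ "gather_dims d n"]
        exI[of _ "gather_layers d n"] exI[of _ "[average_head (d * n) n]"] exI[of _ ds1] exI[of _ ls1])
      simp
qed

end
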